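(* Let $Y$ be a strongly connected finite digraph on which a finite abelian group $G$ acts by automorphisms so that the action on $V_Y$ is free, let $H\le G$, $\Gamma=G/H$, $Z=Y_H$, $X=Y_G$, and let $F$ be an algebraically closed field of characteristic zero. Then $$N_\Gamma(\gamma_{Y/X}(u))=\gamma_{Y/Z}(u)\quad\text{in }F[H][u].$$
   Context: Digraph $Y=(V_Y,E_Y)$ with incidence $e\mapsto(o(e),t(e))$; strongly connected means a directed path exists between any two distinct vertices. For a group $K$ acting on $Y$ by automorphisms, $Y_K$ is the quotient digraph with vertices $K\backslash V_Y$, edges $K\backslash E_Y$ and induced incidence. $\mathcal{A}_Y(w)=\sum_{o(\varepsilon)=w}t(\varepsilon)$ on $\mathbb{Z}V_Y$ is $\mathbb{Z}[K]$-linear, and if $K$ acts freely on $V_Y$ then $\mathbb{Z}V_Y[u]$ is a free $\mathbb{Z}[K][u]$-module of rank $\#V_{Y_K}$. Define $\gamma_{Y/Y_K}(u)=\det_{\mathbb{Z}[K][u]}(\mathcal{I}-\mathcal{A}_Yu)\in\mathbb{Z}[K][u]$ (so $\gamma_{Y/X}$ uses $K=G$ and $\gamma_{Y/Z}$ uses $K=H$). Since $F[G][u]$ is a free $F[H][u]$-module of finite rank, $N_\Gamma:F[G][u]\to F[H][u]$ is defined by $N_\Gamma(P)=\det_{F[H][u]}(m_P)$, $m_P$ the multiplication-by-$P$ map on $F[G][u]$. *)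

theory Defs
  imports "HOL-Library.Poly_Mapping" "HOL-Computational_Algebra.Polynomial"
    "Jordan_Normal_Form.Determinant" "Graph_Theory.Digraph_Component"
begin

(* Finite abelian groups are written additively as a finite type 'g :: {finite, ab_group_add}.
   The group ring R[G] is the monoid algebra ('g \<Rightarrow>\<^sub>0 'r) of HOL-Library.Poly_Mapping
   (convolution product); the group element g is  Poly_Mapping.single g 1.
   R[G][u] is ('g \<Rightarrow>\<^sub>0 'r) poly.  For a subgroup K \<subseteq> G, R[K] (resp. R[K][u]) is the
   subring of R[G] (resp. R[G][u]) of elements supported on K. *)

definition add_subgroup :: "'g::ab_group_add set \<Rightarrow> bool" where
  "add_subgroup H \<longleftrightarrow> 0 \<in> H \<and> (\<forall>a\<in>H. \<forall>b\<in>H. a + b \<in> H) \<and> (\<forall>a\<in>H. - a \<in> H)"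

definition digraph_action ::
  "('v,'e) pre_digraph \<Rightarrow> ('g::ab_group_add \<Rightarrow> 'v \<Rightarrow> 'v) \<Rightarrow> ('g \<Rightarrow> 'e \<Rightarrow> 'e) \<Rightarrow> bool" where
  "digraph_action Y actv acte \<longleftrightarrow>
     (\<forall>g. \<forall>v\<in>verts Y. actv g v \<in> verts Y) \<and>
     (\<forall>v\<in>verts Y. actv 0 v = v) \<and>
     (\<forall>g h. \<forall>v\<in>verts Y. actv (g + h) v = actv g (actv h v)) \<and>
     (\<forall>g. \<forall>e\<in>arcs Y. acte g e \<in> arcs Y) \<and>
     (\<forall>e\<in>arcs Y. acte 0 e = e) \<and>
     (\<forall>g h. \<forall>e\<in>arcs Y. acte (g + h) e = acte g (acte h e)) \<and>
     (\<forall>g. \<forall>e\<in>arcs Y. tail Y (acte g e) = actv g (tail Y e) \<and> head Y (acte g e) = actv g (head Y e))"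

definition free_on :: "'v set \<Rightarrow> ('g::ab_group_add \<Rightarrow> 'v \<Rightarrow> 'v) \<Rightarrow> bool" where
  "free_on S actv \<longleftrightarrow> (\<forall>g. \<forall>v\<in>S. actv g v = v \<longrightarrow> g = 0)"

definition orbit_reps :: "'g set \<Rightarrow> ('g \<Rightarrow> 'v \<Rightarrow> 'v) \<Rightarrow> 'v set \<Rightarrow> 'v list" where
  "orbit_reps K act S = (SOME ws. distinct ws \<and> set ws \<subseteq> S \<and>
       (\<forall>v\<in>S. \<exists>!w. w \<in> set ws \<and> (\<exists>k\<in>K. v = act k w)))"

(* Coefficient a_ij in Z[K] of w_i in A_Y(w_j), where w = orbit representatives:
   A_Y(w_j) = sum over arcs e with tail w_j of head e = sum_i a_ij w_i, with k.w = actv k w *)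
definition adj_coeff ::
  "('v,'e) pre_digraph \<Rightarrow> ('g::{finite,ab_group_add} \<Rightarrow> 'v \<Rightarrow> 'v) \<Rightarrow> 'g set \<Rightarrow> 'v \<Rightarrow> 'v \<Rightarrow> ('g \<Rightarrow>\<^sub>0 int)" where
  "adj_coeff Y actv K wi wj =
     (\<Sum>k\<in>K. Poly_Mapping.single k (int (card {e \<in> arcs Y. tail Y e = wj \<and> head Y e = actv k wi})))"

(* gamma_{Y/Y_K}(u) = det_{Z[K][u]} (I - A_Y u), computed as the determinant of the matrix
   of I - A_Y u in the Z[K][u]-basis given by the orbit representatives *)
definition gamma ::
  "('v,'e) pre_digraph \<Rightarrow> ('g::{finite,ab_group_add} \<Rightarrow> 'v \<Rightarrow> 'v) \<Rightarrow> 'g set \<Rightarrow> ('g \<Rightarrow>\<^sub>0 int) poly" where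
  "gamma Y actv K =
     (let ws = orbit_reps K actv (verts Y); n = length ws in
      det (mat n n (\<lambda>(i,j). (if i = j then 1 else 0) - monom (adj_coeff Y actv K (ws ! i) (ws ! j)) 1)))"

(* N_Gamma : F[G][u] \<rightarrow> F[H][u], N(P) = det_{F[H][u]} (m_P), computed in the F[H][u]-basis
   of F[G][u] given by coset representatives c_1..c_m of G/H:
   P * c_j = sum_i b_ij c_i  with  b_ij = the part of P on the coset c_i - c_j + H, shifted to H *)
definition coset_part :: "'g::{finite,ab_group_add} set \<Rightarrow> 'g \<Rightarrow> ('g \<Rightarrow>\<^sub>0 'r::comm_ring_1) \<Rightarrow> ('g \<Rightarrow>\<^sub>0 'r)" where
  "coset_part H d q = (\<Sum>h\<in>H. Poly_Mapping.single h (Poly_Mapping.lookup q (d + h)))"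

definition norm_map :: "'g::{finite,ab_group_add} set \<Rightarrow> ('g \<Rightarrow>\<^sub>0 'r::comm_ring_1) poly \<Rightarrow> ('g \<Rightarrow>\<^sub>0 'r) poly" where
  "norm_map H P =
     (let cs = orbit_reps H (\<lambda>h g. h + g) UNIV; m = length cs in
      det (mat m m (\<lambda>(i,j). map_poly (coset_part H (cs ! i - cs ! j)) P)))"

definition to_field :: "('g \<Rightarrow>\<^sub>0 int) poly \<Rightarrow> ('g \<Rightarrow>\<^sub>0 'f::field) poly" where
  "to_field P = map_poly (Poly_Mapping.map of_int) P"

end

theory Submission
  imports Defs
begin

text \<open>
  Both sides are determinants of \<open>I - A_Y u\<close> over \<open>Z[H][u]\<close>, mapped to \<open>F[H][u]\<close>. For a matrix
  \<open>M\<close> over \<open>Z[G][u]\<close>, the norm \<open>N_\<Gamma>(det M)\<close> is the determinant of the block matrix obtained by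
  replacing every entry of \<open>M\<close> by its matrix of multiplication in the \<open>Z[H][u]\<close>-basis of coset
  representatives \<open>c_1, ..., c_m\<close> of \<open>G/H\<close>. This identity for matrices with commuting blocks is
  proved by induction via Chio condensation; the pivot can be cancelled because every diagonal entry
  of \<open>I - A_Y u\<close> has constant term \<open>1\<close>. If \<open>M\<close> is the matrix of \<open>I - A_Y u\<close> in the basis of
  \<open>G\<close>-orbit representatives \<open>w_i\<close>, the block matrix is its matrix in the basis \<open>c_k w_i\<close> of
  \<open>H\<close>-orbit representatives; another choice of \<open>H\<close>-orbit representatives conjugates this matrix
  by a permutation and by units of \<open>Z[H]\<close>.
\<close>

section \<open>Determinants over commutative rings\<close>

lemma det_four_block_mat_lower_left_zero_comm:
  fixes X :: "'a::comm_ring_1 mat"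
  assumes X: "X \<in> carrier_mat k k" and B: "B \<in> carrier_mat k l" and D: "D \<in> carrier_mat l l"
  shows "det (four_block_mat X B (0\<^sub>m l k) D) = det X * det D"
  using X B
proof (induction k arbitrary: X B)
  case 0
  have "four_block_mat X B (0\<^sub>m l 0) D = D"
    using 0 D by (intro eq_matI) auto
  then show ?case using 0 by simp
next
  case (Suc k)
  let ?M = "four_block_mat X B (0\<^sub>m l (Suc k)) D"
  have M: "?M \<in> carrier_mat (Suc k + l) (Suc k + l)" using Suc.prems D by auto
  have "det ?M = (\<Sum>i<Suc k + l. ?M $$ (i,0) * cofactor ?M i 0)"
    by (rule laplace_expansion_column[OF M]) simp
  also have "\<dots> = (\<Sum>i<Suc k. ?M $$ (i,0) * cofactor ?M i 0)"
    by (rule sum.mono_neutral_right) (use Suc.prems D in auto)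
  also have "\<dots> = (\<Sum>i<Suc k. X $$ (i,0) * cofactor X i 0) * det D"
    unfolding sum_distrib_right
  proof (rule sum.cong[OF refl])
    fix i assume i: "i \<in> {..<Suc k}"
    define Bd where "Bd = mat k l (\<lambda>(i',j). B $$ (if i' < i then i' else Suc i', j))"
    have "mat_delete ?M i 0 = four_block_mat (mat_delete X i 0) Bd (0\<^sub>m l k) D"
      using Suc.prems D i unfolding Bd_def mat_delete_def by (intro eq_matI) auto
    moreover have "mat_delete X i 0 \<in> carrier_mat k k" "Bd \<in> carrier_mat k l"
      using Suc.prems unfolding mat_delete_def Bd_def by auto
    ultimately have "det (mat_delete ?M i 0) = det (mat_delete X i 0) * det D"
      using Suc.IH by simp
    then show "?M $$ (i,0) * cofactor ?M i 0 = X $$ (i,0) * cofactor X i 0 * det D"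
      using Suc.prems i D unfolding cofactor_def by simp
  qed
  also have "\<dots> = det X * det D"
    using laplace_expansion_column[OF Suc.prems(1), of 0] by simp
  finally show ?case .
qed

lemma det_four_block_mat_upper_right_zero_comm:
  fixes X :: "'a::comm_ring_1 mat"
  assumes X: "X \<in> carrier_mat k k" and C: "C \<in> carrier_mat l k" and D: "D \<in> carrier_mat l l"
  shows "det (four_block_mat X (0\<^sub>m k l) C D) = det X * det D"
proof -
  have "det (four_block_mat X (0\<^sub>m k l) C D) = det (transpose_mat (four_block_mat X (0\<^sub>m k l) C D))"
    using X C D by (intro det_transpose[symmetric]) auto
  also have "transpose_mat (four_block_mat X (0\<^sub>m k l) C D)
      = four_block_mat (transpose_mat X) (transpose_mat C) (0\<^sub>m l k) (transpose_mat D)"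
    using X C D by (subst transpose_four_block_mat) auto
  also have "det \<dots> = det (transpose_mat X) * det (transpose_mat D)"
    using X C D by (intro det_four_block_mat_lower_left_zero_comm) auto
  also have "\<dots> = det X * det D" using X D by (simp add: det_transpose)
  finally show ?thesis .
qed

lemma det_mat_scale_rows_cols:
  fixes C :: "'a::comm_ring_1 mat"
  assumes C: "C \<in> carrier_mat n n"
  shows "det (mat n n (\<lambda>(i,j). d i * C $$ (i,j) * f j)) = (\<Prod>i<n. d i) * (\<Prod>i<n. f i) * det C"
proof -
  have "det (mat n n (\<lambda>(i,j). d i * C $$ (i,j) * f j)) =
      (\<Sum>p\<in>{p. p permutes {0..<n}}. signof p * (\<Prod>i=0..<n. d i * C $$ (i, p i) * f (p i)))"
    by (subst det_def') (auto intro!: sum.cong prod.cong dest: permutes_in_image)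
  also have "\<dots> = (\<Sum>p\<in>{p. p permutes {0..<n}}.
      (\<Prod>i<n. d i) * (\<Prod>i<n. f i) * (signof p * (\<Prod>i=0..<n. C $$ (i, p i))))"
  proof (rule sum.cong[OF refl])
    fix p assume "p \<in> {p. p permutes {0..<n}}"
    then have "(\<Prod>i=0..<n. f (p i)) = (\<Prod>i=0..<n. f i)"
      using prod.permute[of p "{0..<n}" f] by (simp add: o_def)
    then show "signof p * (\<Prod>i=0..<n. d i * C $$ (i, p i) * f (p i))
        = (\<Prod>i<n. d i) * (\<Prod>i<n. f i) * (signof p * (\<Prod>i=0..<n. C $$ (i, p i)))"
      by (simp add: prod.distrib atLeast0LessThan ac_simps)
  qed
  also have "\<dots> = (\<Prod>i<n. d i) * (\<Prod>i<n. f i) * det C"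
    by (simp add: det_def'[OF C] sum_distrib_left)
  finally show ?thesis .
qed

lemma det_mat_permute_rows_cols:
  fixes B :: "'a::comm_ring_1 mat"
  assumes B: "B \<in> carrier_mat n n" and s: "s permutes {0..<n}"
  shows "det (mat n n (\<lambda>(i,j). B $$ (s i, s j))) = det B"
proof -
  define B' where "B' = mat n n (\<lambda>(i,j). B $$ (i, s j))"
  have B'c: "B' \<in> carrier_mat n n" unfolding B'_def by simp
  have s_less: "s j < n" if "j < n" for j using permutes_in_image[OF s, of j] that by auto
  have "mat n n (\<lambda>(i,j). B $$ (s i, s j)) = mat n n (\<lambda>(i,j). B' $$ (s i, j))"
    unfolding B'_def by (rule eq_matI) (auto simp: s_less)
  then have "det (mat n n (\<lambda>(i,j). B $$ (s i, s j))) = signof s * det B'"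
    using det_permute_rows[OF B'c s] by simp
  also have "det B' = det (transpose_mat B')" using det_transpose[OF B'c] by simp
  also have "transpose_mat B' = mat n n (\<lambda>(i,j). transpose_mat B $$ (s i, j))"
    unfolding B'_def using B by (intro eq_matI) (auto simp: s_less)
  also have "det \<dots> = signof s * det (transpose_mat B)"
    by (rule det_permute_rows[OF _ s]) (use B in auto)
  also have "det (transpose_mat B) = det B" using det_transpose[OF B] by simp
  finally have "det (mat n n (\<lambda>(i,j). B $$ (s i, s j))) = (signof s * signof s) * det B"
    by (simp add: mult.assoc)
  moreover have "signof s * signof s = (1::'a)"
    by (metis of_int_1 of_int_mult sign_idempotent)
  ultimately show ?thesis by simp
qed

definition chio_elim_mat :: "'a::comm_ring_1 mat \<Rightarrow> 'a mat" where
  "chio_elim_mat A = (let n = dim_row A - 1 in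
     four_block_mat (1\<^sub>m 1) (0\<^sub>m 1 n) (mat n 1 (\<lambda>(i,_). - A $$ (Suc i, 0))) (A $$ (0,0) \<cdot>\<^sub>m 1\<^sub>m n))"

definition chio_mat :: "'a::comm_ring_1 mat \<Rightarrow> 'a mat" where
  "chio_mat A = mat (dim_row A - 1) (dim_row A - 1)
     (\<lambda>(i,j). A $$ (0,0) * A $$ (Suc i, Suc j) - A $$ (Suc i, 0) * A $$ (0, Suc j))"

lemma chio_elim_mat_carrier:
  "A \<in> carrier_mat (Suc n) (Suc n) \<Longrightarrow> chio_elim_mat A \<in> carrier_mat (Suc n) (Suc n)"
  and chio_mat_carrier: "A \<in> carrier_mat (Suc n) (Suc n) \<Longrightarrow> chio_mat A \<in> carrier_mat n n"
  unfolding chio_elim_mat_def chio_mat_def Let_def by auto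

lemma chio_elim_mat_mult:
  assumes A: "A \<in> carrier_mat (Suc n) (Suc n)"
  shows "chio_elim_mat A * A = four_block_mat (mat 1 1 (\<lambda>_. A $$ (0,0)))
           (mat 1 n (\<lambda>(_,j). A $$ (0, Suc j))) (0\<^sub>m n 1) (chio_mat A)"
    (is "?L * A = ?R")
proof (rule eq_matI)
  fix i j assume "i < dim_row ?R" "j < dim_col ?R"
  then have i: "i < Suc n" and j: "j < Suc n" using chio_mat_carrier[OF A] by auto
  have L_row: "?L $$ (i,k) = (if i = 0 then (if k = 0 then 1 else 0)
        else if k = 0 then - A $$ (i, 0) else if k = i then A $$ (0,0) else 0)" if "k < Suc n" for k
    using A i that unfolding chio_elim_mat_def Let_def by (cases i; cases k) auto
  have "(?L * A) $$ (i,j) = (\<Sum>k\<in>{0..<Suc n}. ?L $$ (i,k) * A $$ (k,j))"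
    using A i j by (simp add: chio_elim_mat_def Let_def scalar_prod_def)
  also have "\<dots> = (if i = 0 then A $$ (0,j) else A $$ (0,0) * A $$ (i,j) - A $$ (i,0) * A $$ (0,j))"
    using i by (simp add: L_row if_distrib[of "\<lambda>x. x * _"] sum.If_cases Int_absorb1 cong: if_cong)
  also have "\<dots> = ?R $$ (i,j)"
    using A i j by (cases i; cases j) (auto simp: chio_mat_def)
  finally show "(?L * A) $$ (i,j) = ?R $$ (i,j)" .
qed (use A in \<open>auto simp: chio_elim_mat_def chio_mat_def\<close>)

lemma det_chio_elim_mat:
  "A \<in> carrier_mat (Suc n) (Suc n) \<Longrightarrow> det (chio_elim_mat A) = A $$ (0,0) ^ n"
  unfolding chio_elim_mat_def Let_def by (subst det_four_block_mat_upper_right_zero_comm) auto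

lemma det_chio_condensation:
  assumes A: "A \<in> carrier_mat (Suc n) (Suc n)"
  shows "A $$ (0,0) ^ n * det A = A $$ (0,0) * det (chio_mat A)"
proof -
  have "A $$ (0,0) ^ n * det A = det (chio_elim_mat A * A)"
    using A chio_elim_mat_carrier[OF A] by (simp add: det_mult det_chio_elim_mat)
  also have "\<dots> = A $$ (0,0) * det (chio_mat A)"
    unfolding chio_elim_mat_mult[OF A]
    by (subst det_four_block_mat_lower_left_zero_comm[of _ 1 _ n])
      (use chio_mat_carrier[OF A] in \<open>auto simp: det_single\<close>)
  finally show ?thesis .
qed

section \<open>Block matrices over a matrix representation\<close>

lemma sum_lessThan_mult_split:
  fixes f :: "nat \<Rightarrow> 'a::comm_monoid_add"
  shows "(\<Sum>z<q*m. f z) = (\<Sum>j<q. \<Sum>t<m. f (j*m+t))"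
proof -
  have "(\<Sum>z<q*m. f z) = (\<Sum>j<q. sum f {j*m..<j*m+m})"
    using sum.nat_group[of f m q] by simp
  also have "\<dots> = (\<Sum>j<q. \<Sum>t<m. f (j*m+t))"
  proof (rule sum.cong[OF refl])
    fix j
    have "sum f {0 + j*m..<m + j*m} = (\<Sum>t\<in>{0..<m}. f (t + j*m))"
      by (rule sum.shift_bounds_nat_ivl)
    then show "sum f {j*m..<j*m+m} = (\<Sum>t<m. f (j*m+t))"
      by (simp add: add.commute atLeast0LessThan)
  qed
  finally show ?thesis .
qed

lemma div_mod_diff_mult:
  assumes "0 < (m::nat)" "p1 * m \<le> p"
  shows "(p - p1*m) div m = p div m - p1" "(p - p1*m) mod m = p mod m"
proof -
  obtain p' where p: "p = p' + p1 * m" using assms(2) by (metis le_add_diff_inverse2)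
  show "(p - p1*m) div m = p div m - p1" "(p - p1*m) mod m = p mod m"
    using assms(1) unfolding p by auto
qed

definition rep_mat :: "('a \<Rightarrow> nat \<Rightarrow> nat \<Rightarrow> 'a) \<Rightarrow> nat \<Rightarrow> 'a \<Rightarrow> 'a mat" where
  "rep_mat \<rho> m x = mat m m (\<lambda>(k,l). \<rho> x k l)"

definition block_mat :: "('a \<Rightarrow> nat \<Rightarrow> nat \<Rightarrow> 'a) \<Rightarrow> nat \<Rightarrow> 'a mat \<Rightarrow> 'a mat" where
  "block_mat \<rho> m A = mat (dim_row A * m) (dim_col A * m)
     (\<lambda>(p,q). \<rho> (A $$ (p div m, q div m)) (p mod m) (q mod m))"

lemma rep_mat_carrier [simp]: "rep_mat \<rho> m x \<in> carrier_mat m m"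
  and dim_rep_mat [simp]: "dim_row (rep_mat \<rho> m x) = m" "dim_col (rep_mat \<rho> m x) = m"
  unfolding rep_mat_def by auto

lemma block_mat_carrier [simp]: "block_mat \<rho> m A \<in> carrier_mat (dim_row A * m) (dim_col A * m)"
  and dim_block_mat [simp]: "dim_row (block_mat \<rho> m A) = dim_row A * m"
    "dim_col (block_mat \<rho> m A) = dim_col A * m"
  unfolding block_mat_def by auto

lemma index_block_mat:
  "p < dim_row A * m \<Longrightarrow> q < dim_col A * m \<Longrightarrow>
     block_mat \<rho> m A $$ (p,q) = \<rho> (A $$ (p div m, q div m)) (p mod m) (q mod m)"
  unfolding block_mat_def by simp

lemma block_mat_single: "block_mat \<rho> m (mat 1 1 (\<lambda>_. a)) = rep_mat \<rho> m a"
  by (rule eq_matI) (auto simp: index_block_mat rep_mat_def)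

lemma block_mat_four_block_mat:
  assumes "A1 \<in> carrier_mat p1 q1" "A2 \<in> carrier_mat p1 q2" "A3 \<in> carrier_mat p2 q1" "A4 \<in> carrier_mat p2 q2"
  shows "block_mat \<rho> m (four_block_mat A1 A2 A3 A4)
    = four_block_mat (block_mat \<rho> m A1) (block_mat \<rho> m A2) (block_mat \<rho> m A3) (block_mat \<rho> m A4)"
proof (rule eq_matI)
  fix i j
  assume "i < dim_row (four_block_mat (block_mat \<rho> m A1) (block_mat \<rho> m A2) (block_mat \<rho> m A3) (block_mat \<rho> m A4))"
    and "j < dim_col (four_block_mat (block_mat \<rho> m A1) (block_mat \<rho> m A2) (block_mat \<rho> m A3) (block_mat \<rho> m A4))"
  then have i: "i < (p1 + p2) * m" and j: "j < (q1 + q2) * m" using assms by (auto simp: algebra_simps)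
  then have m: "0 < m" by (cases m) auto
  have "i div m < p1 \<longleftrightarrow> i < p1 * m" "j div m < q1 \<longleftrightarrow> j < q1 * m"
    "i div m < p1 + p2" "j div m < q1 + q2"
    using i j m by (auto simp: div_less_iff_less_mult)
  then show "block_mat \<rho> m (four_block_mat A1 A2 A3 A4) $$ (i, j)
    = four_block_mat (block_mat \<rho> m A1) (block_mat \<rho> m A2) (block_mat \<rho> m A3) (block_mat \<rho> m A4) $$ (i, j)"
    using assms i j div_mod_diff_mult[OF m, of p1 i] div_mod_diff_mult[OF m, of q1 j]
    by (auto simp: index_block_mat algebra_simps)
qed (use assms in \<open>auto simp: algebra_simps\<close>)

text \<open>The cancellation hypothesis stands in for invertibility of the pivot in Chio condensation:
  it applies to pivots that are congruent to \<open>1\<close> modulo the kernel of \<open>\<epsilon>\<close>.\<close>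

locale matrix_representation =
  fixes \<rho> :: "'a::comm_ring_1 \<Rightarrow> nat \<Rightarrow> nat \<Rightarrow> 'a" and m :: nat and \<epsilon> :: "'a \<Rightarrow> 'b::comm_ring_1"
  assumes rep_one: "k < m \<Longrightarrow> l < m \<Longrightarrow> \<rho> 1 k l = (if k = l then 1 else 0)"
    and rep_add: "k < m \<Longrightarrow> l < m \<Longrightarrow> \<rho> (x + y) k l = \<rho> x k l + \<rho> y k l"
    and rep_mult: "k < m \<Longrightarrow> l < m \<Longrightarrow> \<rho> (x * y) k l = (\<Sum>t<m. \<rho> x k t * \<rho> y t l)"
    and augmentation_hom: "comm_ring_hom \<epsilon>"
    and det_rep_mat_cancel: "\<epsilon> x = 1 \<Longrightarrow> det (rep_mat \<rho> m x) * y = 0 \<Longrightarrow> y = 0"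
begin

lemma rep_zero: "k < m \<Longrightarrow> l < m \<Longrightarrow> \<rho> 0 k l = 0"
  using rep_add[of k l 0 0] by simp

lemma rep_diff: "k < m \<Longrightarrow> l < m \<Longrightarrow> \<rho> (x - y) k l = \<rho> x k l - \<rho> y k l"
  using rep_add[of k l "x - y" y] by (simp add: eq_diff_eq)

lemma rep_sum: "k < m \<Longrightarrow> l < m \<Longrightarrow> \<rho> (sum f S) k l = (\<Sum>s\<in>S. \<rho> (f s) k l)"
  by (induction S rule: infinite_finite_induct) (simp_all add: rep_zero rep_add)

lemma rep_mat_one: "rep_mat \<rho> m 1 = 1\<^sub>m m"
  by (rule eq_matI) (auto simp: rep_mat_def rep_one)

lemma rep_mat_mult: "rep_mat \<rho> m (x * y) = rep_mat \<rho> m x * rep_mat \<rho> m y"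
  by (rule eq_matI) (auto simp: rep_mat_def rep_mult scalar_prod_def atLeast0LessThan intro: sum.cong)

lemma det_rep_mat_mult: "det (rep_mat \<rho> m (x * y)) = det (rep_mat \<rho> m x) * det (rep_mat \<rho> m y)"
  by (simp add: rep_mat_mult det_mult[of _ m])

lemma block_mat_one: "block_mat \<rho> m (1\<^sub>m n) = 1\<^sub>m (n * m)"
proof (rule eq_matI)
  fix i j assume "i < dim_row (1\<^sub>m (n * m))" "j < dim_col (1\<^sub>m (n * m))"
  then have ij: "i < n * m" "j < n * m" by auto
  then have "0 < m" by (cases m) auto
  with ij have "i div m < n" "j div m < n" "i mod m < m" "j mod m < m"
    by (auto simp: div_less_iff_less_mult intro!: mod_less_divisor)
  moreover have "i = j \<longleftrightarrow> i div m = j div m \<and> i mod m = j mod m" by (metis div_mult_mod_eq)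
  ultimately show "block_mat \<rho> m (1\<^sub>m n) $$ (i, j) = 1\<^sub>m (n * m) $$ (i, j)"
    using ij by (auto simp: index_block_mat rep_one rep_zero)
qed auto

lemma block_mat_zero: "block_mat \<rho> m (0\<^sub>m p q) = 0\<^sub>m (p * m) (q * m)"
proof (rule eq_matI)
  fix i j assume "i < dim_row (0\<^sub>m (p * m) (q * m))" "j < dim_col (0\<^sub>m (p * m) (q * m))"
  then have ij: "i < p * m" "j < q * m" by auto
  then have "0 < m" by (cases m) auto
  with ij have "i div m < p" "j div m < q" "i mod m < m" "j mod m < m"
    by (auto simp: div_less_iff_less_mult intro!: mod_less_divisor)
  then show "block_mat \<rho> m (0\<^sub>m p q) $$ (i, j) = 0\<^sub>m (p * m) (q * m) $$ (i, j)"
    using ij by (simp add: index_block_mat rep_zero)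
qed auto

lemma block_mat_mult:
  assumes X: "X \<in> carrier_mat p q" and Y: "Y \<in> carrier_mat q s"
  shows "block_mat \<rho> m (X * Y) = block_mat \<rho> m X * block_mat \<rho> m Y"
proof (rule eq_matI)
  fix i j assume "i < dim_row (block_mat \<rho> m X * block_mat \<rho> m Y)" "j < dim_col (block_mat \<rho> m X * block_mat \<rho> m Y)"
  then have i: "i < p * m" and j: "j < s * m" using X Y by auto
  then have m: "0 < m" by (cases m) auto
  have ij: "i div m < p" "j div m < s" "i mod m < m" "j mod m < m"
    using i j m by (auto simp: div_less_iff_less_mult)
  have "block_mat \<rho> m (X * Y) $$ (i,j) = \<rho> (\<Sum>z<q. X $$ (i div m, z) * Y $$ (z, j div m)) (i mod m) (j mod m)"
    using i j X Y ij by (simp add: index_block_mat scalar_prod_def atLeast0LessThan)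
  also have "\<dots> = (\<Sum>z<q. \<Sum>t<m. \<rho> (X $$ (i div m, z)) (i mod m) t * \<rho> (Y $$ (z, j div m)) t (j mod m))"
    using ij by (simp add: rep_sum rep_mult)
  also have "\<dots> = (\<Sum>w<q*m. block_mat \<rho> m X $$ (i, w) * block_mat \<rho> m Y $$ (w, j))"
    unfolding sum_lessThan_mult_split
  proof (intro sum.cong refl)
    fix z t assume z: "z \<in> {..<q}" and t: "t \<in> {..<m}"
    have "z * m + t < Suc z * m" using t by simp
    also have "Suc z * m \<le> q * m" using z by (intro mult_le_mono1) simp
    finally have "z * m + t < q * m" .
    then show "\<rho> (X $$ (i div m, z)) (i mod m) t * \<rho> (Y $$ (z, j div m)) t (j mod m)
        = block_mat \<rho> m X $$ (i, z * m + t) * block_mat \<rho> m Y $$ (z * m + t, j)"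
      using X Y i j t by (simp add: index_block_mat)
  qed
  also have "\<dots> = (block_mat \<rho> m X * block_mat \<rho> m Y) $$ (i,j)"
    using i j X Y by (simp add: scalar_prod_def atLeast0LessThan)
  finally show "block_mat \<rho> m (X * Y) $$ (i,j) = (block_mat \<rho> m X * block_mat \<rho> m Y) $$ (i,j)" .
qed (use X Y in auto)

lemma det_block_mat_chio_elim_mat:
  assumes A: "A \<in> carrier_mat (Suc n) (Suc n)"
  shows "det (block_mat \<rho> m (chio_elim_mat A)) = det (block_mat \<rho> m (A $$ (0,0) \<cdot>\<^sub>m 1\<^sub>m n))"
proof -
  let ?C = "mat n 1 (\<lambda>(i,_). - A $$ (Suc i, 0))" and ?D = "A $$ (0,0) \<cdot>\<^sub>m 1\<^sub>m n"
  have "block_mat \<rho> m (chio_elim_mat A)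
      = four_block_mat (1\<^sub>m m) (0\<^sub>m m (n * m)) (block_mat \<rho> m ?C) (block_mat \<rho> m ?D)"
    using A unfolding chio_elim_mat_def Let_def
    by (subst block_mat_four_block_mat[of _ 1 1 _ n _ n]) (auto simp: block_mat_one block_mat_zero)
  also have "det \<dots> = det (block_mat \<rho> m ?D)"
    using block_mat_carrier[of \<rho> m ?C] block_mat_carrier[of \<rho> m ?D]
    by (subst det_four_block_mat_upper_right_zero_comm) auto
  finally show ?thesis .
qed

lemma det_block_mat_chio_elim_mat_mult:
  assumes A: "A \<in> carrier_mat (Suc n) (Suc n)"
  shows "det (block_mat \<rho> m (chio_elim_mat A * A))
    = det (rep_mat \<rho> m (A $$ (0,0))) * det (block_mat \<rho> m (chio_mat A))"
proof -
  let ?R = "mat 1 n (\<lambda>(_,j). A $$ (0, Suc j))"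
  have "block_mat \<rho> m (chio_elim_mat A * A)
      = four_block_mat (rep_mat \<rho> m (A $$ (0,0))) (block_mat \<rho> m ?R) (0\<^sub>m (n * m) m) (block_mat \<rho> m (chio_mat A))"
    using chio_mat_carrier[OF A] unfolding chio_elim_mat_mult[OF A]
    by (subst block_mat_four_block_mat[of _ 1 1 _ n _ n])
      (auto simp: block_mat_single[unfolded One_nat_def] block_mat_zero)
  also have "det \<dots> = det (rep_mat \<rho> m (A $$ (0,0))) * det (block_mat \<rho> m (chio_mat A))"
    using block_mat_carrier[of \<rho> m ?R] block_mat_carrier[of \<rho> m "chio_mat A"] chio_mat_carrier[OF A]
    by (subst det_four_block_mat_lower_left_zero_comm) auto
  finally show ?thesis .
qed

theorem det_block_mat:
  assumes "A \<in> carrier_mat n n"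
    and "\<And>i j. i < n \<Longrightarrow> j < n \<Longrightarrow> \<epsilon> (A $$ (i,j)) = (if i = j then 1 else 0)"
  shows "det (block_mat \<rho> m A) = det (rep_mat \<rho> m (det A))"
  using assms
proof (induction n arbitrary: A)
  case 0
  then have "block_mat \<rho> m A \<in> carrier_mat 0 0" using block_mat_carrier[of \<rho> m A] by simp
  then show ?case using 0 by (simp add: rep_mat_one)
next
  case (Suc n)
  note A = Suc.prems(1)
  interpret \<epsilon>: comm_ring_hom \<epsilon> by (rule augmentation_hom)
  let ?a = "A $$ (0,0)"
  have \<epsilon>_a: "\<epsilon> ?a = 1" using Suc.prems(2)[of 0 0] by simp
  have IH_chio: "det (block_mat \<rho> m (chio_mat A)) = det (rep_mat \<rho> m (det (chio_mat A)))"
    using chio_mat_carrier[OF A]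
  proof (rule Suc.IH)
    fix i j assume "i < n" "j < n"
    then show "\<epsilon> (chio_mat A $$ (i,j)) = (if i = j then 1 else 0)"
      using Suc.prems(2)[of "Suc i" "Suc j"] Suc.prems(2)[of "Suc i" 0] Suc.prems(2)[of 0 "Suc j"] \<epsilon>_a A
      by (simp add: chio_mat_def \<epsilon>.hom_mult \<epsilon>.hom_minus)
  qed
  have IH_scalar: "det (block_mat \<rho> m (?a \<cdot>\<^sub>m 1\<^sub>m n)) = det (rep_mat \<rho> m (?a ^ n))"
    using Suc.IH[of "?a \<cdot>\<^sub>m 1\<^sub>m n"] \<epsilon>_a by simp
  have "det (rep_mat \<rho> m (?a ^ n)) * det (block_mat \<rho> m A) = det (block_mat \<rho> m (chio_elim_mat A * A))"
    using A chio_elim_mat_carrier[OF A] block_mat_carrier[of \<rho> m A] block_mat_carrier[of \<rho> m "chio_elim_mat A"]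
    by (simp add: block_mat_mult det_mult[of _ "Suc n * m"] det_block_mat_chio_elim_mat IH_scalar)
  also have "\<dots> = det (rep_mat \<rho> m ?a) * det (rep_mat \<rho> m (det (chio_mat A)))"
    by (simp add: det_block_mat_chio_elim_mat_mult[OF A] IH_chio)
  also have "\<dots> = det (rep_mat \<rho> m (?a ^ n)) * det (rep_mat \<rho> m (det A))"
    using det_chio_condensation[OF A] by (simp add: det_rep_mat_mult[symmetric])
  finally have "det (rep_mat \<rho> m (?a ^ n)) * (det (block_mat \<rho> m A) - det (rep_mat \<rho> m (det A))) = 0"
    by (simp add: right_diff_distrib)
  moreover have "\<epsilon> (?a ^ n) = 1" using \<epsilon>_a by (simp add: \<epsilon>.hom_power)
  ultimately show ?case using det_rep_mat_cancel by fastforce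
qed

end

section \<open>Polynomials over group rings\<close>

lemma const_poly_mult_monom: "[:a:] * monom A n * [:b:] = monom (a * A * b) n"
  by (simp add: smult_monom mult.commute[of _ "[:b:]"] mult.assoc) (simp add: ac_simps)

lemma coeff_0_comm_ring_hom: "comm_ring_hom (\<lambda>p :: 'a::comm_ring_1 poly. coeff p 0)"
  by unfold_locales (auto simp: coeff_mult_0)

lemma poly_mult_eq_0_coeff_0_one:
  fixes p q :: "'a::comm_ring_1 poly"
  assumes "coeff p 0 = 1" "p * q = 0"
  shows "q = 0"
proof -
  have "coeff q k = 0" for k
  proof (induction k rule: less_induct)
    case (less k)
    have "0 = coeff (p * q) k" using assms by simp
    also have "\<dots> = (\<Sum>i\<le>k. coeff p i * coeff q (k - i))" by (rule coeff_mult)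
    also have "\<dots> = (\<Sum>i\<in>{0}. coeff p i * coeff q (k - i))"
      by (rule sum.mono_neutral_right) (use less in auto)
    finally show ?case using assms by simp
  qed
  then show ?thesis by (simp add: poly_eqI)
qed

lemma lookup_mult_finite_group:
  fixes p q :: "'g::{finite,ab_group_add} \<Rightarrow>\<^sub>0 'r::comm_ring_1"
  shows "Poly_Mapping.lookup (p * q) k = (\<Sum>l\<in>UNIV. Poly_Mapping.lookup p l * Poly_Mapping.lookup q (k - l))"
proof -
  have inner: "Sum_any (\<lambda>q'. Poly_Mapping.lookup q q' when k = l + q') = Poly_Mapping.lookup q (k - l)" for l
  proof -
    have "Sum_any (\<lambda>q'. Poly_Mapping.lookup q q' when k = l + q')
        = (\<Sum>q'\<in>UNIV. if q' = k - l then Poly_Mapping.lookup q q' else 0)"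
      by (subst Sum_any.expand_superset[of UNIV]) (auto simp: when_def algebra_simps intro!: sum.cong)
    then show ?thesis by simp
  qed
  show ?thesis
    unfolding lookup_mult inner by (rule Sum_any.expand_superset) auto
qed

lemma lookup_single_one_mult:
  fixes p :: "'g::{finite,ab_group_add} \<Rightarrow>\<^sub>0 'r::comm_ring_1"
  shows "Poly_Mapping.lookup (Poly_Mapping.single c 1 * p) k = Poly_Mapping.lookup p (k - c)"
  by (simp add: lookup_mult_finite_group lookup_single when_def if_distrib[of "\<lambda>x. x * _"] cong: if_cong)

lemma lookup_map_zero: "f 0 = 0 \<Longrightarrow> Poly_Mapping.lookup (Poly_Mapping.map f p) k = f (Poly_Mapping.lookup p k)"
  by transfer (auto simp: when_def)

lemma comm_ring_hom_map_of_int: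
  "comm_ring_hom (Poly_Mapping.map of_int :: ('g::{finite,ab_group_add} \<Rightarrow>\<^sub>0 int) \<Rightarrow> ('g \<Rightarrow>\<^sub>0 'r::comm_ring_1))"
  by unfold_locales
    (auto intro!: poly_mapping_eqI simp: lookup_map_zero lookup_add lookup_mult_finite_group lookup_one when_def)

lemma comm_ring_hom_to_field:
  "comm_ring_hom (to_field :: ('g::{finite,ab_group_add} \<Rightarrow>\<^sub>0 int) poly \<Rightarrow> ('g \<Rightarrow>\<^sub>0 'f::field) poly)"
proof -
  interpret of_int: comm_ring_hom "Poly_Mapping.map of_int :: ('g \<Rightarrow>\<^sub>0 int) \<Rightarrow> ('g \<Rightarrow>\<^sub>0 'f)"
    by (rule comm_ring_hom_map_of_int)
  show ?thesis
    by unfold_locales (auto intro!: poly_eqI simp: to_field_def coeff_map_poly coeff_mult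
        of_int.hom_add of_int.hom_sum of_int.hom_mult)
qed

lemma lookup_coset_part:
  fixes H :: "'g::{finite,ab_group_add} set" and q :: "'g \<Rightarrow>\<^sub>0 'r::comm_ring_1"
  shows "Poly_Mapping.lookup (coset_part H d q) x = (if x \<in> H then Poly_Mapping.lookup q (d + x) else 0)"
  unfolding coset_part_def lookup_sum by (simp add: lookup_single when_def)

lemma coset_part_add: "coset_part H d (p + q) = coset_part H d p + coset_part H d q"
  by (rule poly_mapping_eqI) (simp add: lookup_coset_part lookup_add)

lemma coset_part_zero [simp]: "coset_part H d 0 = 0"
  by (rule poly_mapping_eqI) (simp add: lookup_coset_part)

lemma coset_part_sum: "coset_part H d (sum f S) = (\<Sum>s\<in>S. coset_part H d (f s))"
  by (rule poly_mapping_eqI) (simp add: lookup_coset_part lookup_sum)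

lemma coset_part_map:
  "f 0 = 0 \<Longrightarrow> coset_part H d (Poly_Mapping.map f q) = Poly_Mapping.map f (coset_part H d q)"
  by (rule poly_mapping_eqI) (simp add: lookup_coset_part lookup_map_zero)

section \<open>Orbit transversals\<close>

definition is_transversal :: "'g set \<Rightarrow> ('g \<Rightarrow> 'v \<Rightarrow> 'v) \<Rightarrow> 'v set \<Rightarrow> 'v list \<Rightarrow> bool" where
  "is_transversal K act S ws \<longleftrightarrow> distinct ws \<and> set ws \<subseteq> S \<and>
       (\<forall>v\<in>S. \<exists>!w. w \<in> set ws \<and> (\<exists>k\<in>K. v = act k w))"

lemma transversal_nth_mem: "is_transversal K act S ws \<Longrightarrow> i < length ws \<Longrightarrow> ws ! i \<in> S"
  unfolding is_transversal_def by auto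

lemma add_subgroupD:
  assumes "add_subgroup K"
  shows add_subgroup_zero: "0 \<in> K"
    and add_subgroup_add: "a \<in> K \<Longrightarrow> b \<in> K \<Longrightarrow> a + b \<in> K"
    and add_subgroup_uminus: "a \<in> K \<Longrightarrow> - a \<in> K"
    and add_subgroup_diff: "a \<in> K \<Longrightarrow> b \<in> K \<Longrightarrow> a - b \<in> K"
  using assms unfolding add_subgroup_def by (metis diff_conv_add_uminus)+

lemma add_subgroup_diff_iff: "add_subgroup K \<Longrightarrow> b \<in> K \<Longrightarrow> a - b \<in> K \<longleftrightarrow> a \<in> K"
  by (metis add_subgroup_diff add_subgroup_add diff_add_cancel)

lemma orbit_reps_transversal:
  fixes K :: "'g::ab_group_add set" and act :: "'g \<Rightarrow> 'v \<Rightarrow> 'v"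
  assumes S: "finite S" and K: "add_subgroup K"
    and closed: "\<And>k v. k \<in> K \<Longrightarrow> v \<in> S \<Longrightarrow> act k v \<in> S"
    and act_zero: "\<And>v. v \<in> S \<Longrightarrow> act 0 v = v"
    and act_add: "\<And>a b v. a \<in> K \<Longrightarrow> b \<in> K \<Longrightarrow> v \<in> S \<Longrightarrow> act (a + b) v = act a (act b v)"
  shows "is_transversal K act S (orbit_reps K act S)"
proof -
  define orb where "orb v = {act k v | k. k \<in> K}" for v
  have orb_subset: "orb v \<subseteq> S" if "v \<in> S" for v using that closed unfolding orb_def by auto
  have orb_self: "v \<in> orb v" if "v \<in> S" for v
    using that act_zero add_subgroup_zero[OF K] unfolding orb_def by force
  have orb_eq: "orb w = orb v" if v: "v \<in> S" and w: "w \<in> orb v" for v w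
  proof -
    obtain k where k: "k \<in> K" "w = act k v" using w unfolding orb_def by auto
    have "act k' w = act (k' + k) v" "act k' v = act (k' - k) w" if "k' \<in> K" for k'
      using act_add[OF _ k(1) v, of "k' - k"] act_add[OF that k(1) v] that k add_subgroup_diff[OF K]
      by auto
    then show ?thesis
      using k add_subgroup_add[OF K] add_subgroup_diff[OF K] unfolding orb_def by blast
  qed
  define rep where "rep v = (SOME w. w \<in> orb v)" for v
  have rep: "rep v \<in> orb v" if "v \<in> S" for v
    unfolding rep_def using orb_self[OF that] by (rule someI)
  obtain ws where ws: "distinct ws" "set ws = rep ` S"
    using finite_distinct_list[of "rep ` S"] S by auto
  have "(\<exists>k\<in>K. v = act k w) \<longleftrightarrow> v \<in> orb w" for v w unfolding orb_def by auto
  then have "is_transversal K act S ws"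
    unfolding is_transversal_def
  proof (simp only:, intro conjI ballI)
    show "distinct ws" by fact
    show "set ws \<subseteq> S" using ws rep orb_subset by auto
    fix v assume v: "v \<in> S"
    show "\<exists>!w. w \<in> set ws \<and> v \<in> orb w"
    proof
      show "rep v \<in> set ws \<and> v \<in> orb (rep v)"
        using ws rep[OF v] orb_eq[OF v rep[OF v]] orb_self[OF v] v by auto
    next
      fix w assume w: "w \<in> set ws \<and> v \<in> orb w"
      then obtain v1 where v1: "v1 \<in> S" "w = rep v1" using ws by auto
      have "orb v = orb w" using orb_eq orb_subset rep v1 w by blast
      also have "orb w = orb v1" using orb_eq[OF v1(1) rep[OF v1(1)]] v1 by simp
      finally show "w = rep v" unfolding v1 rep_def by simp
    qed
  qed
  then show ?thesis unfolding orbit_reps_def is_transversal_def by (rule someI)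
qed

definition transversal_index :: "'g set \<Rightarrow> ('g \<Rightarrow> 'v \<Rightarrow> 'v) \<Rightarrow> 'v list \<Rightarrow> 'v \<Rightarrow> nat" where
  "transversal_index K act ws v = (THE i. i < length ws \<and> (\<exists>k\<in>K. v = act k (ws ! i)))"

lemma transversal_unique_index:
  assumes "is_transversal K act S ws" "v \<in> S"
  shows "\<exists>!i. i < length ws \<and> (\<exists>k\<in>K. v = act k (ws ! i))"
proof -
  from assms obtain w where w: "w \<in> set ws" "\<exists>k\<in>K. v = act k w"
    and unique: "\<And>w'. w' \<in> set ws \<Longrightarrow> \<exists>k\<in>K. v = act k w' \<Longrightarrow> w' = w"
    unfolding is_transversal_def by metis
  obtain i where i: "i < length ws" "ws ! i = w" using w(1) by (meson in_set_conv_nth)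
  have "j = i" if "j < length ws" "\<exists>k\<in>K. v = act k (ws ! j)" for j
  proof -
    have "ws ! j = ws ! i" using unique[of "ws ! j"] that i by simp
    moreover have "distinct ws" using assms(1) unfolding is_transversal_def by simp
    ultimately show ?thesis using that(1) i(1) by (simp add: nth_eq_iff_index_eq)
  qed
  then show ?thesis using i w by blast
qed

lemma transversal_index:
  assumes "is_transversal K act S ws" "v \<in> S"
  shows "transversal_index K act ws v < length ws"
    and "\<exists>k\<in>K. v = act k (ws ! transversal_index K act ws v)"
  using theI'[OF transversal_unique_index[OF assms]] unfolding transversal_index_def by auto

lemma transversal_index_eq:
  assumes "is_transversal K act S ws" "v \<in> S" "i < length ws" "k \<in> K" "v = act k (ws ! i)"
  shows "transversal_index K act ws v = i"
  unfolding transversal_index_def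
  by (rule the1_equality[OF transversal_unique_index[OF assms(1,2)]]) (use assms in blast)

section \<open>The group ring as a module over a subgroup ring\<close>

locale coset_transversal =
  fixes H :: "'g::{finite,ab_group_add} set" and cs :: "'g list"
  assumes subgroup: "add_subgroup H" and transversal: "is_transversal H (\<lambda>h g. h + g) UNIV cs"
begin

abbreviation "m \<equiv> length cs"

abbreviation "coset_index \<equiv> transversal_index H (\<lambda>h g. h + g) cs"

lemma cs_unique: "\<exists>!c. c \<in> set cs \<and> (\<exists>h\<in>H. g = h + c)"
  using transversal unfolding is_transversal_def by auto

lemma cs_diff_in_iff: "i < m \<Longrightarrow> j < m \<Longrightarrow> cs ! i - cs ! j \<in> H \<longleftrightarrow> i = j"
  using transversal_index_eq[OF transversal, of "cs ! i" i 0] transversal_index_eq[OF transversal, of "cs ! i" j]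
    add_subgroup_zero[OF subgroup]
  by (metis UNIV_I add.left_neutral diff_add_cancel diff_self)

lemma sum_over_cosets:
  fixes f :: "'g \<Rightarrow> 'a::comm_monoid_add"
  shows "(\<Sum>k<m. \<Sum>y\<in>H. f (a - cs ! k + y)) = (\<Sum>l\<in>UNIV. f l)"
proof -
  have "(\<Sum>k<m. \<Sum>y\<in>H. f (a - cs ! k + y)) = (\<Sum>(k,y)\<in>{..<m} \<times> H. f (a - cs ! k + y))"
    by (rule sum.cartesian_product)
  also have "\<dots> = (\<Sum>l\<in>UNIV. f l)"
  proof (rule sum.reindex_bij_witness[where i="\<lambda>l. (coset_index (a - l), l - a + cs ! coset_index (a - l))"
        and j="\<lambda>(k,y). a - cs ! k + y"])
    fix l :: 'g
    obtain h where h: "coset_index (a - l) < m" "h \<in> H" "a - l = h + cs ! coset_index (a - l)"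
      using transversal_index[OF transversal, of "a - l"] by auto
    then have "l - a + cs ! coset_index (a - l) = - h"
      by (simp add: diff_eq_eq algebra_simps)
    then show "(coset_index (a - l), l - a + cs ! coset_index (a - l)) \<in> {..<m} \<times> H"
      using h add_subgroup_uminus[OF subgroup] by simp
    show "(\<lambda>(k,y). a - cs ! k + y) (coset_index (a - l), l - a + cs ! coset_index (a - l)) = l"
      by simp
  next
    fix ky assume "ky \<in> {..<m} \<times> H"
    then obtain k y where ky: "ky = (k, y)" "k < m" "y \<in> H" by auto
    have "coset_index (cs ! k - y) = k"
      using ky add_subgroup_uminus[OF subgroup] by (intro transversal_index_eq[OF transversal, of _ _ "- y"]) auto
    then show "(coset_index (a - (case ky of (k, y) \<Rightarrow> a - cs ! k + y)),
        (case ky of (k, y) \<Rightarrow> a - cs ! k + y) - a + cs ! coset_index (a - (case ky of (k, y) \<Rightarrow> a - cs ! k + y)))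
        = ky"
      using ky by (simp add: algebra_simps)
  qed auto
  finally show ?thesis .
qed

lemma coset_part_mult:
  fixes p q :: "'g \<Rightarrow>\<^sub>0 'r::comm_ring_1"
  assumes i: "i < m" and j: "j < m"
  shows "coset_part H (cs ! i - cs ! j) (p * q)
    = (\<Sum>k<m. coset_part H (cs ! i - cs ! k) p * coset_part H (cs ! k - cs ! j) q)"
proof (rule poly_mapping_eqI)
  fix x
  let ?p = "Poly_Mapping.lookup p" and ?q = "Poly_Mapping.lookup q"
  let ?term = "\<lambda>k y. (if y \<in> H then ?p (cs ! i - cs ! k + y) else 0) *
    (if x - y \<in> H then ?q (cs ! k - cs ! j + (x - y)) else 0)"
  have rhs: "Poly_Mapping.lookup (\<Sum>k<m. coset_part H (cs ! i - cs ! k) p * coset_part H (cs ! k - cs ! j) q) x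
      = (\<Sum>k<m. \<Sum>y\<in>UNIV. ?term k y)"
    by (simp add: lookup_sum lookup_mult_finite_group lookup_coset_part)
  show "Poly_Mapping.lookup (coset_part H (cs ! i - cs ! j) (p * q)) x
      = Poly_Mapping.lookup (\<Sum>k<m. coset_part H (cs ! i - cs ! k) p * coset_part H (cs ! k - cs ! j) q) x"
  proof (cases "x \<in> H")
    case False
    then have "?term k y = 0" for k y using add_subgroup_diff_iff[OF subgroup] by auto
    then show ?thesis using False rhs by (simp add: lookup_coset_part)
  next
    case True
    have "(\<Sum>y\<in>UNIV. ?term k y) = (\<Sum>y\<in>H. ?p (cs ! i - cs ! k + y) * ?q (cs ! i - cs ! j + x - (cs ! i - cs ! k + y)))"
      for k
    proof -
      have "(\<Sum>y\<in>UNIV. ?term k y) = (\<Sum>y\<in>H. ?term k y)"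
        by (rule sum.mono_neutral_right) auto
      also have "\<dots> = (\<Sum>y\<in>H. ?p (cs ! i - cs ! k + y) * ?q (cs ! i - cs ! j + x - (cs ! i - cs ! k + y)))"
        by (rule sum.cong[OF refl]) (use True add_subgroup_diff[OF subgroup] in \<open>auto simp: algebra_simps\<close>)
      finally show ?thesis .
    qed
    then have "(\<Sum>k<m. \<Sum>y\<in>UNIV. ?term k y) = (\<Sum>l\<in>UNIV. ?p l * ?q (cs ! i - cs ! j + x - l))"
      using sum_over_cosets[of "\<lambda>l. ?p l * ?q (cs ! i - cs ! j + x - l)" "cs ! i"] by simp
    then show ?thesis using True rhs by (simp add: lookup_coset_part lookup_mult_finite_group)
  qed
qed

lemma coset_part_one:
  assumes "k < m" "l < m"
  shows "coset_part H (cs ! k - cs ! l) (1 :: 'g \<Rightarrow>\<^sub>0 'r::comm_ring_1) = (if k = l then 1 else 0)"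
proof (rule poly_mapping_eqI)
  fix x
  have "cs ! k - cs ! l + x \<noteq> 0" if "x \<in> H" "k \<noteq> l"
  proof
    assume "cs ! k - cs ! l + x = 0"
    then have "cs ! k - cs ! l = - x" by (simp add: add_eq_0_iff2)
    then show False using cs_diff_in_iff[OF assms] that add_subgroup_uminus[OF subgroup] by auto
  qed
  then show "Poly_Mapping.lookup (coset_part H (cs ! k - cs ! l) 1) x
      = Poly_Mapping.lookup (if k = l then 1 else 0 :: 'g \<Rightarrow>\<^sub>0 'r) x"
    using add_subgroup_zero[OF subgroup] by (cases "k = l") (auto simp: lookup_coset_part lookup_one when_def)
qed

text \<open>Entry \<open>(k, l)\<close> of the matrix of multiplication by \<open>P\<close> on \<open>R[G][u]\<close>, in the \<open>R[H][u]\<close>-basis \<open>cs\<close>.\<close>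

definition coset_rep :: "('g \<Rightarrow>\<^sub>0 'r::comm_ring_1) poly \<Rightarrow> nat \<Rightarrow> nat \<Rightarrow> ('g \<Rightarrow>\<^sub>0 'r) poly" where
  "coset_rep P k l = map_poly (coset_part H (cs ! k - cs ! l)) P"

lemma coset_rep_monom: "coset_rep (monom b n) k l = monom (coset_part H (cs ! k - cs ! l) b) n"
  unfolding coset_rep_def by (rule map_poly_monom) simp

lemma matrix_representation_coset_rep:
  "matrix_representation (coset_rep :: ('g \<Rightarrow>\<^sub>0 'r::comm_ring_1) poly \<Rightarrow> _) m (\<lambda>P. coeff P 0)"
proof (rule matrix_representation.intro)
  fix k l :: nat and x y :: "('g \<Rightarrow>\<^sub>0 'r) poly"
  assume kl: "k < m" "l < m"
  show "coset_rep 1 k l = (if k = l then 1 else 0)"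
    unfolding coset_rep_def map_poly_1 by (simp add: coset_part_one[OF kl])
  show "coset_rep (x + y) k l = coset_rep x k l + coset_rep y k l"
    unfolding coset_rep_def by (rule poly_eqI) (simp add: coeff_map_poly coset_part_add)
  show "coset_rep (x * y) k l = (\<Sum>t<m. coset_rep x k t * coset_rep y t l)"
    unfolding coset_rep_def
  proof (rule poly_eqI)
    fix n
    have "coeff (map_poly (coset_part H (cs ! k - cs ! l)) (x * y)) n
        = (\<Sum>i\<le>n. \<Sum>t<m. coset_part H (cs ! k - cs ! t) (coeff x i) * coset_part H (cs ! t - cs ! l) (coeff y (n - i)))"
      by (simp add: coeff_map_poly coeff_mult coset_part_sum coset_part_mult[OF kl])
    also have "\<dots> = (\<Sum>t<m. \<Sum>i\<le>n. coset_part H (cs ! k - cs ! t) (coeff x i) * coset_part H (cs ! t - cs ! l) (coeff y (n - i)))"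
      by (rule sum.swap)
    also have "\<dots> = coeff (\<Sum>t<m. map_poly (coset_part H (cs ! k - cs ! t)) x * map_poly (coset_part H (cs ! t - cs ! l)) y) n"
      by (simp add: coeff_sum coeff_mult coeff_map_poly)
    finally show "coeff (map_poly (coset_part H (cs ! k - cs ! l)) (x * y)) n
        = coeff (\<Sum>t<m. map_poly (coset_part H (cs ! k - cs ! t)) x * map_poly (coset_part H (cs ! t - cs ! l)) y) n" .
  qed
next
  show "comm_ring_hom (\<lambda>P :: ('g \<Rightarrow>\<^sub>0 'r) poly. coeff P 0)" by (rule coeff_0_comm_ring_hom)
next
  fix x y :: "('g \<Rightarrow>\<^sub>0 'r) poly"
  assume x: "coeff x 0 = 1" and xy: "det (rep_mat coset_rep m x) * y = 0"
  interpret coeff_0: comm_ring_hom "\<lambda>P :: ('g \<Rightarrow>\<^sub>0 'r) poly. coeff P 0" by (rule coeff_0_comm_ring_hom)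
  have "map_mat (\<lambda>P. coeff P 0) (rep_mat coset_rep m x) = 1\<^sub>m m"
    by (rule eq_matI) (auto simp: rep_mat_def coset_rep_def coeff_map_poly x coset_part_one)
  then have "coeff (det (rep_mat coset_rep m x)) 0 = 1"
    using coeff_0.hom_det[of "rep_mat coset_rep m x"] by simp
  then show "y = 0" using xy by (rule poly_mult_eq_0_coeff_0_one)
qed

lemma map_mat_to_field_rep_mat:
  "map_mat to_field (rep_mat coset_rep m P) = (rep_mat coset_rep m (to_field P) :: ('g \<Rightarrow>\<^sub>0 'f::field) poly mat)"
proof -
  have zero: "Poly_Mapping.map (of_int :: int \<Rightarrow> 'f) (0 :: 'g \<Rightarrow>\<^sub>0 int) = 0"
    by (rule poly_mapping_eqI) (simp add: lookup_map_zero)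
  have "to_field (coset_rep P k l) = (coset_rep (to_field P) k l :: ('g \<Rightarrow>\<^sub>0 'f) poly)" for k l
  proof -
    let ?c = "coset_part H (cs ! k - cs ! l)"
    have "(Poly_Mapping.map of_int :: _ \<Rightarrow> 'g \<Rightarrow>\<^sub>0 'f) \<circ> ?c = ?c \<circ> Poly_Mapping.map of_int"
      by (rule ext) (simp add: coset_part_map)
    then show ?thesis
      unfolding coset_rep_def to_field_def
      using map_poly_map_poly[of "Poly_Mapping.map of_int :: _ \<Rightarrow> 'g \<Rightarrow>\<^sub>0 'f" ?c P]
        map_poly_map_poly[of ?c "Poly_Mapping.map of_int :: _ \<Rightarrow> 'g \<Rightarrow>\<^sub>0 'f" P] zero
      by simp
  qed
  then show ?thesis by (intro eq_matI) (simp_all add: rep_mat_def)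
qed

lemma norm_map_eq_det_rep_mat:
  "cs = orbit_reps H (\<lambda>h g. h + g) UNIV \<Longrightarrow> norm_map H P = det (rep_mat coset_rep m P)"
  unfolding norm_map_def Let_def rep_mat_def coset_rep_def by simp

end

section \<open>Free actions on digraphs\<close>

definition arc_count :: "('v,'e) pre_digraph \<Rightarrow> 'v \<Rightarrow> 'v \<Rightarrow> nat" where
  "arc_count Y x y = card {e \<in> arcs Y. tail Y e = x \<and> head Y e = y}"

definition gamma_mat ::
  "('v,'e) pre_digraph \<Rightarrow> ('g::{finite,ab_group_add} \<Rightarrow> 'v \<Rightarrow> 'v) \<Rightarrow> 'g set \<Rightarrow> 'v list \<Rightarrow> ('g \<Rightarrow>\<^sub>0 int) poly mat" where
  "gamma_mat Y actv K ws = mat (length ws) (length ws)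
     (\<lambda>(i,j). (if i = j then 1 else 0) - monom (adj_coeff Y actv K (ws ! i) (ws ! j)) 1)"

lemma gamma_eq_det_gamma_mat: "gamma Y actv K = det (gamma_mat Y actv K (orbit_reps K actv (verts Y)))"
  unfolding gamma_def gamma_mat_def Let_def ..

lemma gamma_mat_carrier [simp]: "gamma_mat Y actv K ws \<in> carrier_mat (length ws) (length ws)"
  and dim_gamma_mat [simp]: "dim_row (gamma_mat Y actv K ws) = length ws" "dim_col (gamma_mat Y actv K ws) = length ws"
  unfolding gamma_mat_def by auto

lemma index_gamma_mat:
  "i < length ws \<Longrightarrow> j < length ws \<Longrightarrow>
     gamma_mat Y actv K ws $$ (i,j) = (if i = j then 1 else 0) - monom (adj_coeff Y actv K (ws ! i) (ws ! j)) 1"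
  unfolding gamma_mat_def by simp

lemma lookup_adj_coeff:
  "Poly_Mapping.lookup (adj_coeff Y actv K a b) x = (if x \<in> K then int (arc_count Y b (actv x a)) else 0)"
  unfolding adj_coeff_def arc_count_def lookup_sum by (simp add: lookup_single when_def)

locale free_digraph_action =
  fixes Y :: "('v,'e) pre_digraph" and actv :: "'g::{finite,ab_group_add} \<Rightarrow> 'v \<Rightarrow> 'v"
    and acte :: "'g \<Rightarrow> 'e \<Rightarrow> 'e"
  assumes fin_digraph: "fin_digraph Y" and action: "digraph_action Y actv acte"
    and free: "free_on (verts Y) actv"
begin

lemma actv_closed: "v \<in> verts Y \<Longrightarrow> actv g v \<in> verts Y"
  and actv_zero: "v \<in> verts Y \<Longrightarrow> actv 0 v = v"
  and actv_add: "v \<in> verts Y \<Longrightarrow> actv (g + h) v = actv g (actv h v)"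
  and acte_closed: "e \<in> arcs Y \<Longrightarrow> acte g e \<in> arcs Y"
  and acte_zero: "e \<in> arcs Y \<Longrightarrow> acte 0 e = e"
  and acte_add: "e \<in> arcs Y \<Longrightarrow> acte (g + h) e = acte g (acte h e)"
  and tail_acte: "e \<in> arcs Y \<Longrightarrow> tail Y (acte g e) = actv g (tail Y e)"
  and head_acte: "e \<in> arcs Y \<Longrightarrow> head Y (acte g e) = actv g (head Y e)"
  using action unfolding digraph_action_def by auto

lemma actv_uminus: "v \<in> verts Y \<Longrightarrow> actv (- g) (actv g v) = v"
  using actv_add[of v "-g" g] actv_zero by simp

lemma acte_uminus: "e \<in> arcs Y \<Longrightarrow> acte (- g) (acte g e) = e"
  using acte_add[of e "-g" g] acte_zero by simp

lemma actv_eq_imp_eq: assumes v: "v \<in> verts Y" and eq: "actv a v = actv b v" shows "a = b"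
proof -
  have "actv (- b + a) v = actv (- b) (actv a v)" by (rule actv_add[OF v])
  also have "\<dots> = v" using eq actv_uminus[OF v] by simp
  finally have "- b + a = 0" using free v unfolding free_on_def by blast
  then show ?thesis by (simp add: add_eq_0_iff2 neg_eq_iff_add_eq_0 add.commute)
qed

lemma orbit_reps_transversal_verts:
  "add_subgroup K \<Longrightarrow> is_transversal K actv (verts Y) (orbit_reps K actv (verts Y))"
  using fin_digraph.finite_verts[OF fin_digraph]
  by (intro orbit_reps_transversal) (auto simp: actv_closed actv_zero actv_add)

lemma arc_count_act:
  assumes x: "x \<in> verts Y" and y: "y \<in> verts Y"
  shows "arc_count Y (actv g x) (actv g y) = arc_count Y x y"
proof -
  let ?A = "{e \<in> arcs Y. tail Y e = x \<and> head Y e = y}"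
  let ?B = "{e \<in> arcs Y. tail Y e = actv g x \<and> head Y e = actv g y}"
  have "bij_betw (acte g) ?A ?B"
  proof (rule bij_betw_byWitness[where f'="acte (- g)"])
    show "\<forall>a\<in>?A. acte (- g) (acte g a) = a" using acte_uminus by auto
    show "\<forall>a\<in>?B. acte g (acte (- g) a) = a" using acte_uminus[of _ "-g"] by auto
    show "acte g ` ?A \<subseteq> ?B" using acte_closed tail_acte head_acte by auto
    show "acte (- g) ` ?B \<subseteq> ?A"
      using acte_closed tail_acte head_acte actv_uminus x y by auto
  qed
  then show ?thesis unfolding arc_count_def by (simp add: bij_betw_same_card)
qed

lemma arc_count_act_act:
  assumes x: "x \<in> verts Y" and y: "y \<in> verts Y"
  shows "arc_count Y (actv b y) (actv g (actv a x)) = arc_count Y y (actv (g + a - b) x)"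
proof -
  have "actv b (actv (g + a - b) x) = actv (b + (g + a - b)) x" by (rule actv_add[OF x, symmetric])
  also have "\<dots> = actv g (actv a x)" by (simp add: actv_add[OF x])
  finally have eq: "actv b (actv (g + a - b) x) = actv g (actv a x)" .
  show ?thesis unfolding eq[symmetric] by (rule arc_count_act[OF y actv_closed[OF x]])
qed

lemma adj_coeff_act:
  assumes K: "add_subgroup K" "a \<in> K" "b \<in> K" and x: "x \<in> verts Y" and y: "y \<in> verts Y"
  shows "adj_coeff Y actv K (actv a x) (actv b y) = Poly_Mapping.single (b - a) 1 * adj_coeff Y actv K x y"
proof (rule poly_mapping_eqI)
  fix g
  have "g - (b - a) \<in> K \<longleftrightarrow> g \<in> K" using K by (simp add: add_subgroup_diff_iff add_subgroup_diff)
  then show "Poly_Mapping.lookup (adj_coeff Y actv K (actv a x) (actv b y)) g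
      = Poly_Mapping.lookup (Poly_Mapping.single (b - a) 1 * adj_coeff Y actv K x y) g"
    by (simp add: lookup_adj_coeff lookup_single_one_mult arc_count_act_act x y algebra_simps)
qed

lemma coset_part_adj_coeff:
  assumes "x \<in> verts Y" "y \<in> verts Y"
  shows "coset_part H (a - b) (adj_coeff Y actv UNIV x y) = adj_coeff Y actv H (actv a x) (actv b y)"
  by (rule poly_mapping_eqI) (simp add: lookup_coset_part lookup_adj_coeff arc_count_act_act assms algebra_simps)

lemma transversal_index_inj:
  assumes K: "add_subgroup K"
    and xs: "is_transversal K actv (verts Y) xs" and ys: "is_transversal K actv (verts Y) ys"
  shows "inj_on (\<lambda>p. transversal_index K actv xs (ys ! p)) {..<length ys}"
proof (rule inj_onI)
  fix p q assume p: "p \<in> {..<length ys}" and q: "q \<in> {..<length ys}"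
    and eq: "transversal_index K actv xs (ys ! p) = transversal_index K actv xs (ys ! q)"
  have ys_verts: "ys ! p \<in> verts Y" "ys ! q \<in> verts Y"
    using transversal_nth_mem[OF ys] p q by auto
  define i where "i = transversal_index K actv xs (ys ! p)"
  have "xs ! i \<in> verts Y"
    using transversal_nth_mem[OF xs transversal_index(1)[OF xs ys_verts(1)]] unfolding i_def .
  moreover obtain a b where ab: "a \<in> K" "ys ! p = actv a (xs ! i)" "b \<in> K" "ys ! q = actv b (xs ! i)"
    using transversal_index(2)[OF xs ys_verts(1)] transversal_index(2)[OF xs ys_verts(2)] eq
    unfolding i_def by metis
  ultimately have "ys ! q = actv (b - a) (ys ! p)"
    using ab actv_add[of "xs ! i" "b - a" a] by simp
  then have "transversal_index K actv ys (ys ! q) = p"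
    using ab K p ys_verts by (intro transversal_index_eq[OF ys]) (auto simp: add_subgroup_diff)
  moreover have "transversal_index K actv ys (ys ! q) = q"
    using q ys_verts add_subgroup_zero[OF K] by (intro transversal_index_eq[OF ys, of _ _ 0]) (auto simp: actv_zero)
  ultimately show "p = q" by simp
qed

lemma transversal_index_image:
  assumes xs: "is_transversal K actv (verts Y) xs" and ys: "is_transversal K actv (verts Y) ys"
  shows "(\<lambda>p. transversal_index K actv xs (ys ! p)) ` {..<length ys} \<subseteq> {..<length xs}"
  using transversal_index(1)[OF xs transversal_nth_mem[OF ys]] by auto

lemma transversal_length_eq:
  assumes "add_subgroup K"
    and xs: "is_transversal K actv (verts Y) xs" and ys: "is_transversal K actv (verts Y) ys"
  shows "length xs = length ys"
  using card_inj_on_le[OF transversal_index_inj[OF assms] transversal_index_image[OF xs ys]]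
    card_inj_on_le[OF transversal_index_inj[OF assms(1) ys xs] transversal_index_image[OF ys xs]]
  by simp

lemma transversal_index_bij:
  assumes "add_subgroup K"
    and xs: "is_transversal K actv (verts Y) xs" and ys: "is_transversal K actv (verts Y) ys"
  shows "bij_betw (\<lambda>p. transversal_index K actv xs (ys ! p)) {..<length ys} {..<length xs}"
proof -
  have "card ((\<lambda>p. transversal_index K actv xs (ys ! p)) ` {..<length ys}) = card {..<length xs}"
    using card_image[OF transversal_index_inj[OF assms]] transversal_length_eq[OF assms] by simp
  then show ?thesis
    using transversal_index_inj[OF assms] transversal_index_image[OF xs ys] card_subset_eq[of "{..<length xs}"]
    by (simp add: bij_betw_def)
qed

lemma transversal_reindex:
  assumes K: "add_subgroup K"
    and xs: "is_transversal K actv (verts Y) xs" and ys: "is_transversal K actv (verts Y) ys"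
  obtains s t where "s permutes {0..<length ys}" "length xs = length ys"
    "\<And>p. p < length ys \<Longrightarrow> t p \<in> K \<and> ys ! p = actv (t p) (xs ! s p)"
proof -
  define s where "s p = (if p < length ys then transversal_index K actv xs (ys ! p) else p)" for p
  have len: "length xs = length ys" by (rule transversal_length_eq[OF K xs ys])
  have "bij_betw s {..<length ys} {..<length ys}
      \<longleftrightarrow> bij_betw (\<lambda>p. transversal_index K actv xs (ys ! p)) {..<length ys} {..<length xs}"
    unfolding len by (rule bij_betw_cong) (simp add: s_def)
  then have "s permutes {0..<length ys}"
    using transversal_index_bij[OF K xs ys] by (intro bij_imp_permutes) (auto simp: s_def atLeast0LessThan)
  moreover obtain t where "\<And>p. p < length ys \<Longrightarrow> t p \<in> K \<and> ys ! p = actv (t p) (xs ! s p)"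
  proof -
    have "\<exists>k\<in>K. ys ! p = actv k (xs ! s p)" if "p < length ys" for p
      using transversal_index(2)[OF xs transversal_nth_mem[OF ys that]] that by (simp add: s_def)
    then show ?thesis using that by metis
  qed
  ultimately show ?thesis using that len by blast
qed

lemma gamma_mat_reindex:
  assumes K: "add_subgroup K" and s: "s permutes {0..<length ys}" and len: "length xs = length ys"
    and t: "\<And>p. p < length ys \<Longrightarrow> t p \<in> K \<and> ys ! p = actv (t p) (xs ! s p)"
    and xs: "set xs \<subseteq> verts Y"
  shows "gamma_mat Y actv K ys = mat (length ys) (length ys) (\<lambda>(p,q).
    [:Poly_Mapping.single (- t p) 1:] * gamma_mat Y actv K xs $$ (s p, s q) * [:Poly_Mapping.single (t q) 1:])"
proof (rule eq_matI)
  fix p q assume "p < dim_row (mat (length ys) (length ys) (\<lambda>(p,q).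
    [:Poly_Mapping.single (- t p) 1:] * gamma_mat Y actv K xs $$ (s p, s q) * [:Poly_Mapping.single (t q) 1:]))"
    "q < dim_col (mat (length ys) (length ys) (\<lambda>(p,q).
    [:Poly_Mapping.single (- t p) 1:] * gamma_mat Y actv K xs $$ (s p, s q) * [:Poly_Mapping.single (t q) 1:]))"
  then have pq: "p < length ys" "q < length ys" by auto
  have s_less: "s p < length ys" "s q < length ys" using permutes_in_image[OF s] pq by auto
  let ?a = "[:Poly_Mapping.single (- t p) 1:]" and ?b = "[:Poly_Mapping.single (t q) (1::int):]"
  have "Poly_Mapping.single (t q - t p) 1 = Poly_Mapping.single (- t p) 1 * Poly_Mapping.single (t q) (1::int)"
    by (simp add: mult_single)
  then have adj: "adj_coeff Y actv K (ys ! p) (ys ! q)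
      = Poly_Mapping.single (- t p) 1 * adj_coeff Y actv K (xs ! s p) (xs ! s q) * Poly_Mapping.single (t q) 1"
    using adj_coeff_act[OF K, of "t p" "t q" "xs ! s p" "xs ! s q"] t pq s_less xs len
    by (simp add: subsetD ac_simps)
  have delta: "(if p = q then 1 else 0) = ?a * (if s p = s q then 1 else 0) * ?b"
  proof (cases "p = q")
    case False
    then have "s p \<noteq> s q" using permutes_inj[OF s] by (meson injD)
    then show ?thesis using False by simp
  qed (simp add: mult_single)
  have "gamma_mat Y actv K ys $$ (p,q) = (if p = q then 1 else 0) - monom (adj_coeff Y actv K (ys ! p) (ys ! q)) 1"
    using pq by (rule index_gamma_mat)
  also have "\<dots> = ?a * (if s p = s q then 1 else 0) * ?b - ?a * monom (adj_coeff Y actv K (xs ! s p) (xs ! s q)) 1 * ?b"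
    unfolding delta adj const_poly_mult_monom ..
  also have "\<dots> = ?a * gamma_mat Y actv K xs $$ (s p, s q) * ?b"
    using s_less len by (simp only: index_gamma_mat left_diff_distrib right_diff_distrib)
  finally show "gamma_mat Y actv K ys $$ (p,q) = mat (length ys) (length ys) (\<lambda>(p,q).
    [:Poly_Mapping.single (- t p) 1:] * gamma_mat Y actv K xs $$ (s p, s q) * [:Poly_Mapping.single (t q) 1:]) $$ (p,q)"
    using pq by simp
qed auto

lemma det_gamma_mat_transversal_indep:
  assumes K: "add_subgroup K"
    and xs: "is_transversal K actv (verts Y) xs" and ys: "is_transversal K actv (verts Y) ys"
  shows "det (gamma_mat Y actv K ys) = det (gamma_mat Y actv K xs)"
proof -
  obtain s t where s: "s permutes {0..<length ys}" and len: "length xs = length ys"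
    and t: "\<And>p. p < length ys \<Longrightarrow> t p \<in> K \<and> ys ! p = actv (t p) (xs ! s p)"
    using transversal_reindex[OF K xs ys] by blast
  let ?N = "length ys"
  define e where "e a = ([:Poly_Mapping.single a 1:] :: ('g \<Rightarrow>\<^sub>0 int) poly)" for a
  let ?M = "mat ?N ?N (\<lambda>(i,j). gamma_mat Y actv K xs $$ (s i, s j))"
  have "gamma_mat Y actv K ys = mat ?N ?N (\<lambda>(p,q). e (- t p) * ?M $$ (p,q) * e (t q))"
    using xs permutes_in_image[OF s]
    by (subst gamma_mat_reindex[OF K s len t]) (auto simp: is_transversal_def e_def intro!: eq_matI)
  then have "det (gamma_mat Y actv K ys) = (\<Prod>i<?N. e (- t i)) * (\<Prod>i<?N. e (t i)) * det ?M"
    using det_mat_scale_rows_cols[of ?M ?N "\<lambda>p. e (- t p)" "\<lambda>q. e (t q)"] by simp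
  also have "(\<Prod>i<?N. e (- t i)) * (\<Prod>i<?N. e (t i)) = 1"
    unfolding prod.distrib[symmetric] by (simp add: e_def mult_single one_pCons[symmetric])
  also have "det ?M = det (gamma_mat Y actv K xs)"
    using s len by (intro det_mat_permute_rows_cols) auto
  finally show ?thesis by simp
qed

end

section \<open>Restriction to a subgroup\<close>

locale free_action_with_subgroup = free_digraph_action Y actv acte + coset_transversal H cs
  for Y :: "('v,'e) pre_digraph" and actv :: "'g::{finite,ab_group_add} \<Rightarrow> 'v \<Rightarrow> 'v"
    and acte :: "'g \<Rightarrow> 'e \<Rightarrow> 'e" and H :: "'g set" and cs :: "'g list"
begin

definition coset_translates :: "'v list \<Rightarrow> 'v list" where
  "coset_translates ws = map (\<lambda>z. actv (cs ! (z mod m)) (ws ! (z div m))) [0..<length ws * m]"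

lemma length_coset_translates [simp]: "length (coset_translates ws) = length ws * m"
  unfolding coset_translates_def by simp

lemma nth_coset_translates:
  "z < length ws * m \<Longrightarrow> coset_translates ws ! z = actv (cs ! (z mod m)) (ws ! (z div m))"
  unfolding coset_translates_def by simp

lemma m_pos: "0 < m"
  using cs_unique[of 0] by (cases cs) auto

lemma div_mod_less: "z < n * m \<Longrightarrow> z div m < n \<and> z mod m < m"
  using m_pos by (simp add: div_less_iff_less_mult)

lemma coset_translates_nth_mem:
  assumes "i < length ws" "k < m"
  shows "actv (cs ! k) (ws ! i) \<in> set (coset_translates ws)"
proof -
  have "i * m + k < Suc i * m" using assms by simp
  also have "\<dots> \<le> length ws * m" using assms by (intro mult_le_mono1) simp
  finally have "i * m + k < length ws * m" .
  moreover have "(i * m + k) div m = i" "(i * m + k) mod m = k" using assms m_pos by auto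
  ultimately show ?thesis using nth_coset_translates[of "i * m + k" ws] by (metis length_coset_translates nth_mem)
qed

lemma coset_translate_unique:
  assumes ws: "is_transversal UNIV actv (verts Y) ws"
    and ikh: "i < length ws" "k < m" "h \<in> H" and ikh': "i' < length ws" "k' < m" "h' \<in> H"
    and eq: "actv h' (actv (cs ! k') (ws ! i')) = actv h (actv (cs ! k) (ws ! i))"
  shows "i' = i \<and> k' = k"
proof -
  note ws_verts = transversal_nth_mem[OF ws]
  have eq': "actv (h' + cs ! k') (ws ! i') = actv (h + cs ! k) (ws ! i)"
    using eq ikh ikh' ws_verts by (simp add: actv_add)
  have ws_index: "transversal_index UNIV actv ws (actv g (ws ! j)) = j" if "j < length ws" for g j
    using that ws_verts actv_closed by (intro transversal_index_eq[OF ws]) auto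
  have cs_index: "coset_index (h + cs ! j) = j" if "h \<in> H" "j < m" for h j
    using that by (intro transversal_index_eq[OF transversal]) auto
  have "i' = i"
    using ws_index[OF ikh'(1), of "h' + cs ! k'"] ws_index[OF ikh(1), of "h + cs ! k"] eq' by simp
  then have "h' + cs ! k' = h + cs ! k" using actv_eq_imp_eq[OF ws_verts[OF ikh(1)]] eq' by simp
  then have "k' = k" using cs_index[OF ikh'(3,2)] cs_index[OF ikh(3,2)] by simp
  with \<open>i' = i\<close> show ?thesis ..
qed

lemma distinct_coset_translates:
  assumes ws: "is_transversal UNIV actv (verts Y) ws"
  shows "distinct (coset_translates ws)"
proof (rule distinct_conv_nth[THEN iffD2], intro allI impI)
  fix z1 z2 assume z: "z1 < length (coset_translates ws)" "z2 < length (coset_translates ws)" "z1 \<noteq> z2"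
  have "z1 div m = z2 div m \<and> z1 mod m = z2 mod m \<Longrightarrow> z1 = z2" by (metis div_mult_mod_eq)
  then show "coset_translates ws ! z1 \<noteq> coset_translates ws ! z2"
    using z coset_translate_unique[OF ws, of "z1 div m" "z1 mod m" 0 "z2 div m" "z2 mod m" 0]
      div_mod_less add_subgroup_zero[OF subgroup] actv_closed transversal_nth_mem[OF ws]
    by (auto simp: nth_coset_translates actv_zero)
qed

lemma coset_translates_transversal:
  assumes ws: "is_transversal UNIV actv (verts Y) ws"
  shows "is_transversal H actv (verts Y) (coset_translates ws)"
  unfolding is_transversal_def
proof (intro conjI ballI)
  note ws_verts = transversal_nth_mem[OF ws]
  show "distinct (coset_translates ws)" using ws by (rule distinct_coset_translates)
  show "set (coset_translates ws) \<subseteq> verts Y"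
    using ws_verts actv_closed div_mod_less by (auto simp: in_set_conv_nth nth_coset_translates)
  fix v assume v: "v \<in> verts Y"
  obtain i g where i: "i < length ws" "v = actv g (ws ! i)"
    using transversal_index[OF ws v] by blast
  obtain k h where k: "k < m" "h \<in> H" "g = h + cs ! k"
    using transversal_index[OF transversal, of g] by auto
  have v_eq: "v = actv h (actv (cs ! k) (ws ! i))"
    using i k actv_add[OF ws_verts[OF i(1)]] by simp
  show "\<exists>!w. w \<in> set (coset_translates ws) \<and> (\<exists>h\<in>H. v = actv h w)"
  proof
    show "actv (cs ! k) (ws ! i) \<in> set (coset_translates ws) \<and> (\<exists>h\<in>H. v = actv h (actv (cs ! k) (ws ! i)))"
      using coset_translates_nth_mem[OF i(1) k(1)] k(2) v_eq by blast
  next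
    fix w assume "w \<in> set (coset_translates ws) \<and> (\<exists>h\<in>H. v = actv h w)"
    then obtain z h' where z: "z < length ws * m" "w = coset_translates ws ! z" "h' \<in> H" "v = actv h' w"
      by (auto simp: in_set_conv_nth)
    then have "actv h' (actv (cs ! (z mod m)) (ws ! (z div m))) = actv h (actv (cs ! k) (ws ! i))"
      using v_eq nth_coset_translates[OF z(1)] by simp
    then have "z div m = i \<and> z mod m = k"
      using coset_translate_unique[OF ws i(1) k(1,2)] div_mod_less[OF z(1)] z(3) by blast
    then show "w = actv (cs ! k) (ws ! i)" using z(1,2) nth_coset_translates by simp
  qed
qed

lemma block_mat_gamma_mat:
  assumes "set ws \<subseteq> verts Y"
  shows "block_mat coset_rep m (gamma_mat Y actv UNIV ws) = gamma_mat Y actv H (coset_translates ws)"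
proof (rule eq_matI)
  interpret rep: matrix_representation "coset_rep :: ('g \<Rightarrow>\<^sub>0 int) poly \<Rightarrow> _" m "\<lambda>P. coeff P 0"
    by (rule matrix_representation_coset_rep)
  fix z1 z2
  assume "z1 < dim_row (gamma_mat Y actv H (coset_translates ws))"
    and "z2 < dim_col (gamma_mat Y actv H (coset_translates ws))"
  then have z: "z1 < length ws * m" "z2 < length ws * m" by auto
  have verts: "ws ! (z1 div m) \<in> verts Y" "ws ! (z2 div m) \<in> verts Y"
    using assms div_mod_less[OF z(1)] div_mod_less[OF z(2)] by auto
  have "z1 = z2 \<longleftrightarrow> z1 div m = z2 div m \<and> z1 mod m = z2 mod m" by (metis div_mult_mod_eq)
  then show "block_mat coset_rep m (gamma_mat Y actv UNIV ws) $$ (z1, z2)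
      = gamma_mat Y actv H (coset_translates ws) $$ (z1, z2)"
    using z div_mod_less[OF z(1)] div_mod_less[OF z(2)]
    by (simp add: index_block_mat index_gamma_mat nth_coset_translates rep.rep_diff rep.rep_one rep.rep_zero
        coset_rep_monom coset_part_adj_coeff[OF verts])
qed auto

lemma gamma_subgroup_eq_det_rep_mat: "gamma Y actv H = det (rep_mat coset_rep m (gamma Y actv UNIV))"
proof -
  interpret rep: matrix_representation "coset_rep :: ('g \<Rightarrow>\<^sub>0 int) poly \<Rightarrow> _" m "\<lambda>P. coeff P 0"
    by (rule matrix_representation_coset_rep)
  define ws where "ws = orbit_reps UNIV actv (verts Y)"
  have ws: "is_transversal UNIV actv (verts Y) ws"
    unfolding ws_def by (rule orbit_reps_transversal_verts) (simp add: add_subgroup_def)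
  have "gamma Y actv H = det (gamma_mat Y actv H (coset_translates ws))"
    unfolding gamma_eq_det_gamma_mat
    by (rule det_gamma_mat_transversal_indep[OF subgroup coset_translates_transversal[OF ws]
          orbit_reps_transversal_verts[OF subgroup]])
  also have "\<dots> = det (block_mat coset_rep m (gamma_mat Y actv UNIV ws))"
    using ws by (simp add: block_mat_gamma_mat is_transversal_def)
  also have "\<dots> = det (rep_mat coset_rep m (det (gamma_mat Y actv UNIV ws)))"
    by (rule rep.det_block_mat) (auto simp: index_gamma_mat)
  finally show ?thesis by (simp add: gamma_eq_det_gamma_mat ws_def)
qed

end

theorem theorem3p5:
  fixes Y :: "('v,'e) pre_digraph"
    and actv :: "'g::{finite,ab_group_add} \<Rightarrow> 'v \<Rightarrow> 'v"
    and acte :: "'g \<Rightarrow> 'e \<Rightarrow> 'e"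
    and H :: "'g set"
  assumes "fin_digraph Y"
    and "strongly_connected Y"
    and "digraph_action Y actv acte"
    and "free_on (verts Y) actv"
    and "add_subgroup H"
  shows "norm_map H (to_field (gamma Y actv UNIV) :: ('g \<Rightarrow>\<^sub>0 'f::{alg_closed_field,field_char_0}) poly)
           = to_field (gamma Y actv H)"
proof -
  define cs where "cs = orbit_reps H (\<lambda>h g. h + g) UNIV"
  have "is_transversal H (\<lambda>h g. h + g) UNIV cs"
    unfolding cs_def by (rule orbit_reps_transversal) (auto simp: assms(5) add.assoc)
  with assms interpret free_action_with_subgroup Y actv acte H cs
    by (intro free_action_with_subgroup.intro free_digraph_action.intro coset_transversal.intro)
  interpret to_field: comm_ring_hom "to_field :: ('g \<Rightarrow>\<^sub>0 int) poly \<Rightarrow> ('g \<Rightarrow>\<^sub>0 'f) poly"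
    by (rule comm_ring_hom_to_field)
  have "norm_map H (to_field (gamma Y actv UNIV))
      = det (rep_mat coset_rep m (to_field (gamma Y actv UNIV) :: ('g \<Rightarrow>\<^sub>0 'f) poly))"
    by (rule norm_map_eq_det_rep_mat[OF cs_def])
  also have "\<dots> = to_field (det (rep_mat coset_rep m (gamma Y actv UNIV)))"
    by (simp add: map_mat_to_field_rep_mat[symmetric] to_field.hom_det)
  also have "\<dots> = to_field (gamma Y actv H)"
    by (simp add: gamma_subgroup_eq_det_rep_mat)
  finally show ?thesis .
qed

end
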